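(* Let $\mathcal{P}(3^3)$ be the graph whose vertices are the 280 partitions of $\{1,\ldots,9\}$ into three cells each of size three, two such partitions being adjacent if and only if each cell of one partition contains exactly one point from each cell of the other, and let $A$ be its adjacency matrix. Let $M$ be the $280\times 36$ $0/1$-matrix with rows indexed by these partitions and columns indexed by the 2-element subsets of $\{1,\ldots,9\}$, whose entry in row $\pi$ and column $\{i,j\}$ is $1$ if and only if $\{i,j\}$ is contained in a cell of $\pi$. Let $J$ be the $280\times 36$ all-ones matrix. Then every column of $M-\frac14 J$ is an eigenvector of $A$ with eigenvalue $-12$, and the columns of $M-\frac14 J$ span a space of dimension $27$. *)

theory Defs
  imports Complex_Main "HOL-Library.Function_Algebras"
begin

definition parts333 :: "nat set set set" where
  "parts333 = {P. \<Union>P = {1..9} \<and> card P = 3 \<and> (\<forall>c\<in>P. card c = 3)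
                  \<and> (\<forall>c\<in>P. \<forall>d\<in>P. c \<noteq> d \<longrightarrow> c \<inter> d = {})}"

definition adj333 :: "nat set set \<Rightarrow> nat set set \<Rightarrow> bool" where
  "adj333 P Q \<longleftrightarrow> (\<forall>c\<in>P. \<forall>d\<in>Q. card (c \<inter> d) = 1)"

definition pairs9 :: "nat set set" where
  "pairs9 = {e. e \<subseteq> {1..9} \<and> card e = 2}"

definition Mentry :: "nat set set \<Rightarrow> nat set \<Rightarrow> real" where
  "Mentry P e = (if \<exists>c\<in>P. e \<subseteq> c then 1 else 0)"

definition colMJ :: "nat set \<Rightarrow> nat set set \<Rightarrow> real" where
  "colMJ e = (\<lambda>P. if P \<in> parts333 then Mentry P e - 1/4 else 0)"

definition adjA :: "(nat set set \<Rightarrow> real) \<Rightarrow> nat set set \<Rightarrow> real" where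
  "adjA f = (\<lambda>P. if P \<in> parts333 then (\<Sum>Q\<in>{Q\<in>parts333. adj333 P Q}. f Q) else 0)"

end

(* Relabelling the nine points permutes the partitions and preserves adjacency and the
   entries of M, and every pair of a partition is moved by some relabelling to {1,2} (same
   cell) or {1,4} (different cells) of the standard partition {{1,2,3},{4,5,6},{7,8,9}}.
   The 36 neighbours of the standard partition are its transversals, given by two orderings
   of {4,5,6} and {7,8,9}; none of them has 1 and 2 in a cell and 12 have 1 and 4 in a cell,
   so the neighbour sums of a column of M - J/4 are -9 = -12 (1 - 1/4) and 3 = -12 (0 - 1/4).

   Every point lies in a cell with exactly two others and every row of M has 9 ones, so the
   columns v_e of M - J/4 satisfy sum_j v_ij = 0 for each i and sum_e v_e = 0; these
   relations express every v_e through the 27 columns of the pairs avoiding 1 other than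
   {2,3}. Conversely, if sum_e x_e M_e is constant, exchanging two points k, l between two
   cells shows that x_ku - x_lu does not depend on u, which forces a combination of those
   27 columns to be trivial. *)

theory Submission
  imports Defs
begin

lemma parts333D:
  assumes "P \<in> parts333"
  shows "\<Union>P = {1..9}" "card P = 3" "\<And>c. c \<in> P \<Longrightarrow> card c = 3"
    "\<And>c d. c \<in> P \<Longrightarrow> d \<in> P \<Longrightarrow> c \<noteq> d \<Longrightarrow> c \<inter> d = {}"
  using assms unfolding parts333_def by auto

lemma parts333I:
  assumes "A \<union> B \<union> C = {1..9}" "card A = 3" "card B = 3" "card C = 3"
    and "A \<inter> B = {}" "A \<inter> C = {}" "B \<inter> C = {}"
  shows "{A, B, C} \<in> parts333"
proof -
  have "A \<noteq> {}" "B \<noteq> {}" "C \<noteq> {}" using assms(2-4) by auto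
  then have "A \<noteq> B" "A \<noteq> C" "B \<noteq> C" using assms(5-7) by auto
  then show ?thesis using assms unfolding parts333_def by (auto simp: card_insert_if)
qed

lemma pairs9_finite: "finite pairs9"
  unfolding pairs9_def by (rule finite_subset[of _ "Pow {1..9}"]) auto

lemma card_pairs9: "card pairs9 = 36"
  unfolding pairs9_def by (simp add: n_subsets numeral_eq_Suc)

lemma pairs9_doubleton: "{i, j} \<in> pairs9 \<longleftrightarrow> i \<in> {1..9} \<and> j \<in> {1..9} \<and> i \<noteq> j"
  unfolding pairs9_def by auto

lemma pairs9E:
  assumes "e \<in> pairs9"
  obtains i j where "e = {i, j}" "i \<in> {1..9}" "j \<in> {1..9}" "i \<noteq> j"
  using assms unfolding pairs9_def by (auto simp: card_2_iff)

lemma Mentry_cell: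
  assumes "P \<in> parts333" "c \<in> P" "i \<in> c"
  shows "Mentry P {i, j} = (if j \<in> c then 1 else 0)"
proof -
  have "(\<exists>d\<in>P. {i, j} \<subseteq> d) \<longleftrightarrow> j \<in> c"
    using assms parts333D(4)[OF assms(1)] by blast
  then show ?thesis unfolding Mentry_def by simp
qed

section \<open>Relabelling\<close>

definition standard_partition :: "nat set set" where
  "standard_partition = {{1..3}, {4..6}, {7..9}}"

lemma standard_partition_in_parts333: "standard_partition \<in> parts333"
  unfolding standard_partition_def by (intro parts333I) auto

lemma parts333_relabel:
  assumes L: "bij_betw L {1..9} {1..9}" and P: "P \<in> parts333"
  shows "image L ` P \<in> parts333"
proof -
  have inj: "inj_on L {1..9}" and onto: "L ` {1..9} = {1..9}"
    using L by (auto simp: bij_betw_def)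
  have sub: "c \<subseteq> {1..9}" if "c \<in> P" for c
    using P that parts333D(1) by blast
  have "\<Union>(image L ` P) = L ` \<Union>P" by blast
  then have "\<Union>(image L ` P) = {1..9}"
    using parts333D(1)[OF P] onto by simp
  moreover have "card (image L ` P) = 3"
    using parts333D(2)[OF P] inj_on_subset[OF inj_on_image_Pow[OF inj]] sub
    by (subst card_image) auto
  moreover have "\<forall>c\<in>P. card (L ` c) = 3"
    using parts333D(3)[OF P] inj_on_subset[OF inj sub] by (simp add: card_image)
  moreover have "\<forall>c\<in>P. \<forall>d\<in>P. L ` c \<noteq> L ` d \<longrightarrow> L ` c \<inter> L ` d = {}"
  proof (intro ballI impI)
    fix c d assume cd: "c \<in> P" "d \<in> P" "L ` c \<noteq> L ` d"
    then have "c \<inter> d = {}" using parts333D(4)[OF P] by blast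
    moreover have "L ` c \<inter> L ` d = L ` (c \<inter> d)"
      using inj_on_image_Int[OF inj sub[OF cd(1)] sub[OF cd(2)]] by simp
    ultimately show "L ` c \<inter> L ` d = {}" by simp
  qed
  ultimately show ?thesis unfolding parts333_def by simp
qed

lemma adj333_relabel:
  assumes inj: "inj_on L {1..9}" and P: "P \<in> parts333" and Q: "Q \<in> parts333"
  shows "adj333 (image L ` P) (image L ` Q) \<longleftrightarrow> adj333 P Q"
proof -
  have "card (L ` c \<inter> L ` d) = card (c \<inter> d)" if "c \<in> P" "d \<in> Q" for c d
  proof -
    have "c \<subseteq> {1..9}" "d \<subseteq> {1..9}"
      using parts333D(1)[OF P] parts333D(1)[OF Q] that by blast+
    then have "L ` c \<inter> L ` d = L ` (c \<inter> d)" "inj_on L (c \<inter> d)"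
      using inj_on_image_Int[OF inj] inj_on_subset[OF inj, of "c \<inter> d"] by auto
    then show ?thesis by (simp add: card_image)
  qed
  then show ?thesis unfolding adj333_def by auto
qed

lemma Mentry_relabel:
  assumes inj: "inj_on L {1..9}" and P: "P \<in> parts333" and e: "e \<subseteq> {1..9}"
  shows "Mentry (image L ` P) (L ` e) = Mentry P e"
proof -
  have "L ` e \<subseteq> L ` c \<longleftrightarrow> e \<subseteq> c" if "c \<in> P" for c
  proof -
    have c: "c \<subseteq> {1..9}" using parts333D(1)[OF P] that by blast
    show ?thesis
    proof
      assume sub: "L ` e \<subseteq> L ` c"
      show "e \<subseteq> c"
      proof
        fix x assume "x \<in> e"
        then have "L x \<in> L ` c" using sub by blast
        then show "x \<in> c" using inj_on_image_mem_iff[OF inj _ c] \<open>x \<in> e\<close> e by blast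
      qed
    qed (rule image_mono)
  qed
  then show ?thesis unfolding Mentry_def by auto
qed

lemma neighbours_relabel:
  assumes L: "bij_betw L {1..9} {1..9}" and P: "P \<in> parts333"
  shows "{Q\<in>parts333. adj333 (image L ` P) Q} = image (image L) ` {Q\<in>parts333. adj333 P Q}"
proof
  have inj: "inj_on L {1..9}" and onto: "L ` {1..9} = {1..9}"
    using L by (auto simp: bij_betw_def)
  show "image (image L) ` {Q\<in>parts333. adj333 P Q} \<subseteq> {Q\<in>parts333. adj333 (image L ` P) Q}"
    using parts333_relabel[OF L] adj333_relabel[OF inj P] by auto
  show "{Q\<in>parts333. adj333 (image L ` P) Q} \<subseteq> image (image L) ` {Q\<in>parts333. adj333 P Q}"
  proof
    fix Q assume "Q \<in> {Q\<in>parts333. adj333 (image L ` P) Q}"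
    then have Q: "Q \<in> parts333" "adj333 (image L ` P) Q" by auto
    define Q' where "Q' = image (inv_into {1..9} L) ` Q"
    have Q': "Q' \<in> parts333"
      unfolding Q'_def by (rule parts333_relabel[OF bij_betw_inv_into[OF L] Q(1)])
    have "L ` (inv_into {1..9} L ` d) = d" if "d \<in> Q" for d
      using image_inv_into_cancel[OF onto] parts333D(1)[OF Q(1)] that by blast
    then have "image L ` Q' = Q"
      unfolding Q'_def image_image by simp
    moreover have "adj333 P Q'"
      using Q(2) adj333_relabel[OF inj P Q'] \<open>image L ` Q' = Q\<close> by simp
    ultimately show "Q \<in> image (image L) ` {Q\<in>parts333. adj333 P Q}"
      using Q' by blast
  qed
qed

lemma card_3_containing:
  assumes "card X = 3" "x \<in> X"
  obtains y z where "X = {x, y, z}"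
proof -
  have "card (X - {x}) = 2" using assms by simp
  then obtain y z where "X - {x} = {y, z}" by (auto simp: card_2_iff)
  with assms(2) have "X = {x, y, z}" by blast
  then show ?thesis using that by blast
qed

lemma card_3_containing2:
  assumes "card X = 3" "x \<in> X" "y \<in> X" "x \<noteq> y"
  obtains z where "X = {x, y, z}"
proof -
  have "card (X - {x, y}) = 1" using assms by (simp add: card_Diff_subset)
  then obtain z where "X - {x, y} = {z}" by (auto simp: card_1_singleton_iff)
  with assms(2,3) have "X = {x, y, z}" by blast
  then show ?thesis using that by blast
qed

lemma parts333_labelling:
  assumes P: "{{a0, a1, a2}, {b0, b1, b2}, {c0, c1, c2}} \<in> parts333"
  obtains L where "bij_betw L {1..9} {1..9}"
    "image L ` standard_partition = {{a0, a1, a2}, {b0, b1, b2}, {c0, c1, c2}}"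
    "L 1 = a0" "L 2 = a1" "L 4 = b0"
proof
  define L where "L n = [a0, a1, a2, b0, b1, b2, c0, c1, c2] ! (n - 1)" for n
  have "{1..3} = {1, 2, 3::nat}" "{4..6} = {4, 5, 6::nat}" "{7..9} = {7, 8, 9::nat}" by auto
  then show image: "image L ` standard_partition = {{a0, a1, a2}, {b0, b1, b2}, {c0, c1, c2}}"
    by (simp add: standard_partition_def L_def)
  have "L ` {1..9} = L ` \<Union>standard_partition"
    unfolding standard_partition_def by auto
  also have "\<dots> = \<Union>(image L ` standard_partition)" by blast
  also have "\<dots> = {1..9}" using parts333D(1)[OF P] image by simp
  finally have onto: "L ` {1..9} = {1..9}" .
  then have "inj_on L {1..9}" by (intro eq_card_imp_inj_on) simp_all
  with onto show "bij_betw L {1..9} {1..9}" by (simp add: bij_betw_def)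
  show "L 1 = a0" "L 2 = a1" "L 4 = b0" by (simp_all add: L_def)
qed

lemma parts333_standard_labelling:
  assumes P: "P \<in> parts333" and i: "i \<in> {1..9}" and j: "j \<in> {1..9}" and "i \<noteq> j"
  obtains L where "bij_betw L {1..9} {1..9}" "image L ` standard_partition = P"
    "{i, j} = L ` {1, 2} \<or> {i, j} = L ` {1, 4}"
proof -
  obtain A where A: "A \<in> P" "i \<in> A" using i parts333D(1)[OF P] by blast
  obtain B where B: "B \<in> P" "j \<in> B" using j parts333D(1)[OF P] by blast
  note cell3 = parts333D(3)[OF P]
  show ?thesis
  proof (cases "j \<in> A")
    case True
    obtain a2 where "A = {i, j, a2}"
      using card_3_containing2[OF cell3[OF A(1)] A(2) True \<open>i \<noteq> j\<close>] .
    moreover obtain B' C where BC: "P = {A, B', C}"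
      using card_3_containing[OF parts333D(2)[OF P] A(1)] .
    moreover obtain b0 b1 b2 where "B' = {b0, b1, b2}"
      using cell3[of B'] BC card_3_iff[of B'] by auto
    moreover obtain c0 c1 c2 where "C = {c0, c1, c2}"
      using cell3[of C] BC card_3_iff[of C] by auto
    ultimately obtain L where "bij_betw L {1..9} {1..9}" "image L ` standard_partition = P"
        "L 1 = i" "L 2 = j"
      using parts333_labelling P by metis
    then show ?thesis using that by auto
  next
    case False
    then have "A \<noteq> B" using B(2) by blast
    obtain a1 a2 where "A = {i, a1, a2}"
      using card_3_containing[OF cell3[OF A(1)] A(2)] .
    moreover obtain b1 b2 where "B = {j, b1, b2}"
      using card_3_containing[OF cell3[OF B(1)] B(2)] .
    moreover obtain C where ABC: "P = {A, B, C}"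
      using card_3_containing2[OF parts333D(2)[OF P] A(1) B(1) \<open>A \<noteq> B\<close>] .
    moreover obtain c0 c1 c2 where "C = {c0, c1, c2}"
      using cell3[of C] ABC card_3_iff[of C] by auto
    ultimately obtain L where "bij_betw L {1..9} {1..9}" "image L ` standard_partition = P"
        "L 1 = i" "L 4 = j"
      using parts333_labelling P by metis
    then show ?thesis using that by auto
  qed
qed

section \<open>Neighbours of the standard partition\<close>

fun transversal :: "nat \<times> nat \<times> nat \<Rightarrow> nat \<times> nat \<times> nat \<Rightarrow> nat set set" where
  "transversal (a, b, c) (d, e, f) = {{1, a, d}, {2, b, e}, {3, c, f}}"

definition orderings :: "'a \<Rightarrow> 'a \<Rightarrow> 'a \<Rightarrow> ('a \<times> 'a \<times> 'a) set" where
  "orderings x y z = {(x, y, z), (x, z, y), (y, x, z), (y, z, x), (z, x, y), (z, y, x)}"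

lemma orderings_iff:
  assumes "distinct [x, y, z]"
  shows "(a, b, c) \<in> orderings x y z \<longleftrightarrow> {a, b, c} = {x, y, z} \<and> distinct [a, b, c]"
proof
  assume "{a, b, c} = {x, y, z} \<and> distinct [a, b, c]"
  then have "a \<in> {x, y, z}" "b \<in> {x, y, z}" "c \<in> {x, y, z}" "distinct [a, b, c]" by auto
  then show "(a, b, c) \<in> orderings x y z" unfolding orderings_def by auto
qed (use assms in \<open>auto simp: orderings_def\<close>)

lemma orderings_interval_iff:
  fixes n :: nat
  shows "(a, b, c) \<in> orderings n (n + 1) (n + 2) \<longleftrightarrow> {a, b, c} \<subseteq> {n..n + 2} \<and> distinct [a, b, c]"
proof
  assume abc: "{a, b, c} \<subseteq> {n..n + 2} \<and> distinct [a, b, c]"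
  then have "{a, b, c} = {n..n + 2}"
    by (intro card_subset_eq) auto
  also have "{n..n + 2} = {n, n + 1, n + 2}" by auto
  finally show "(a, b, c) \<in> orderings n (n + 1) (n + 2)"
    using abc by (simp add: orderings_iff)
qed (auto simp: orderings_def)

lemma triple_eq_cancel:
  fixes i a d a' d' :: nat
  assumes eq: "{i, a, d} = {i, a', d'}" and "i < a" "i < a'" "a < d'" "a' < d"
  shows "a = a' \<and> d = d'"
proof -
  have "a \<in> {i, a', d'}" "d \<in> {i, a', d'}" unfolding eq[symmetric] by simp_all
  then show ?thesis using assms(2-5) by auto
qed

lemma transversal_cell_meets_rows:
  assumes "i \<in> {1..3}" "a \<in> {4..6}" "d \<in> {7..9}"
  shows "\<forall>r\<in>standard_partition. card (r \<inter> {i, a, d}) = 1"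
proof -
  have "{1..3} \<inter> {i, a, d} = {i}" "{4..6} \<inter> {i, a, d} = {a}" "{7..9} \<inter> {i, a, d} = {d}"
    using assms by auto
  then show ?thesis unfolding standard_partition_def by simp
qed

lemma transversal_neighbour:
  assumes "s \<in> orderings 4 5 6" "t \<in> orderings 7 8 9"
  shows "transversal s t \<in> parts333 \<and> adj333 standard_partition (transversal s t)"
proof -
  obtain a b c d e f where st: "s = (a, b, c)" "t = (d, e, f)"
    by (cases s, cases t) auto
  have s_range: "{a, b, c} \<subseteq> {4..6}" "distinct [a, b, c]"
    using assms(1) orderings_interval_iff[of a b c 4] st by simp_all
  have t_range: "{d, e, f} \<subseteq> {7..9}" "distinct [d, e, f]"
    using assms(2) orderings_interval_iff[of d e f 7] st by simp_all
  have "{a, b, c} = {4..6}" "{d, e, f} = {7..9}"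
    using s_range t_range by (auto intro!: card_subset_eq)
  then have "{1, a, d} \<union> {2, b, e} \<union> {3, c, f} = {1, 2, 3} \<union> {4..6} \<union> {7..9}"
    by blast
  also have "\<dots> = {1..9}" by auto
  finally have "{{1, a, d}, {2, b, e}, {3, c, f}} \<in> parts333"
    using s_range t_range by (intro parts333I) auto
  moreover have "\<forall>r\<in>standard_partition. \<forall>y\<in>{{1, a, d}, {2, b, e}, {3, c, f}}. card (r \<inter> y) = 1"
    using transversal_cell_meets_rows[of 1 a d] transversal_cell_meets_rows[of 2 b e]
      transversal_cell_meets_rows[of 3 c f] s_range t_range by auto
  ultimately show ?thesis unfolding st transversal.simps adj333_def by simp
qed

lemma standard_neighbour_cell:
  assumes Q: "Q \<in> parts333" "adj333 standard_partition Q" and y: "y \<in> Q"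
  obtains i a d where "i \<in> {1..3}" "a \<in> {4..6}" "d \<in> {7..9}" "y = {i, a, d}"
proof -
  have one: "\<exists>x. r \<inter> y = {x}" if "r \<in> standard_partition" for r
    using Q(2) y that unfolding adj333_def by (simp add: card_1_singleton_iff)
  obtain i a d where i: "{1..3} \<inter> y = {i}" and a: "{4..6} \<inter> y = {a}" and d: "{7..9} \<inter> y = {d}"
    using one unfolding standard_partition_def by (metis insertCI)
  have "y \<subseteq> {1..9}" using Q(1) y parts333D(1) by blast
  then have "y = ({1..3} \<inter> y) \<union> ({4..6} \<inter> y) \<union> ({7..9} \<inter> y)"
    by auto
  then have "y = {i, a, d}" unfolding i a d by auto
  moreover have "i \<in> {1..3}" "a \<in> {4..6}" "d \<in> {7..9}"
    using i a d by blast+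
  ultimately show ?thesis using that by blast
qed

lemma standard_neighbour_cell_through:
  assumes Q: "Q \<in> parts333" "adj333 standard_partition Q" and i: "i \<in> {1..3}"
  obtains a d where "a \<in> {4..6}" "d \<in> {7..9}" "{i, a, d} \<in> Q"
proof -
  have "i \<in> \<Union>Q" using i parts333D(1)[OF Q(1)] by auto
  then obtain y where y: "y \<in> Q" "i \<in> y" by blast
  obtain i' a d where cell: "i' \<in> {1..3}" "a \<in> {4..6}" "d \<in> {7..9}" "y = {i', a, d}"
    by (rule standard_neighbour_cell[OF Q y(1)])
  moreover have "i \<noteq> a" "i \<noteq> d" using i cell(2,3) by auto
  ultimately have "i = i'" using y(2) by blast
  then show ?thesis using that y(1) cell by blast
qed

lemma standard_neighbour_is_transversal:
  assumes Q: "Q \<in> parts333" "adj333 standard_partition Q"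
  shows "\<exists>s\<in>orderings 4 5 6. \<exists>t\<in>orderings 7 8 9. Q = transversal s t"
proof -
  obtain a d where ad: "a \<in> {4..6}" "d \<in> {7..9}" "{1, a, d} \<in> Q"
    by (rule standard_neighbour_cell_through[OF Q, of 1]) auto
  obtain b e where be: "b \<in> {4..6}" "e \<in> {7..9}" "{2, b, e} \<in> Q"
    by (rule standard_neighbour_cell_through[OF Q, of 2]) auto
  obtain c f where cf: "c \<in> {4..6}" "f \<in> {7..9}" "{3, c, f} \<in> Q"
    by (rule standard_neighbour_cell_through[OF Q, of 3]) auto
  have same_cell: "y = z" if "y \<in> Q" "z \<in> Q" "k \<in> y" "k \<in> z" for y z k
    using parts333D(4)[OF Q(1) that(1,2)] that(3,4) by blast
  have "1 \<notin> {2, b, e}" "1 \<notin> {3, c, f}" "2 \<notin> {3, c, f}"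
    using be cf by auto
  then have "{1, a, d} \<inter> {2, b, e} = {}" "{1, a, d} \<inter> {3, c, f} = {}" "{2, b, e} \<inter> {3, c, f} = {}"
    using ad be cf parts333D(4)[OF Q(1)] by blast+
  then have "distinct [a, b, c]" "distinct [d, e, f]"
    by auto
  then have "(a, b, c) \<in> orderings 4 5 6" "(d, e, f) \<in> orderings 7 8 9"
    using orderings_interval_iff[of a b c 4] orderings_interval_iff[of d e f 7] ad be cf by simp_all
  moreover have "Q = transversal (a, b, c) (d, e, f)"
  proof
    show "transversal (a, b, c) (d, e, f) \<subseteq> Q"
      using ad be cf by simp
    show "Q \<subseteq> transversal (a, b, c) (d, e, f)"
    proof
      fix y assume y: "y \<in> Q"
      obtain i x z where "i \<in> {1..3}" "y = {i, x, z}"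
        by (rule standard_neighbour_cell[OF Q y])
      then have "1 \<in> y \<or> 2 \<in> y \<or> 3 \<in> y" by auto
      then have "y = {1, a, d} \<or> y = {2, b, e} \<or> y = {3, c, f}"
        using same_cell[OF y] ad(3) be(3) cf(3) by blast
      then show "y \<in> transversal (a, b, c) (d, e, f)" by auto
    qed
  qed
  ultimately show ?thesis by blast
qed

lemma neighbours_standard_partition:
  "{Q\<in>parts333. adj333 standard_partition Q}
    = (\<lambda>(s, t). transversal s t) ` (orderings 4 5 6 \<times> orderings 7 8 9)"
  using transversal_neighbour standard_neighbour_is_transversal by fast

lemma inj_on_transversal: "inj_on (\<lambda>(s, t). transversal s t) (orderings 4 5 6 \<times> orderings 7 8 9)"
proof (rule inj_onI)
  fix x y
  assume "x \<in> orderings 4 5 6 \<times> orderings 7 8 9" "y \<in> orderings 4 5 6 \<times> orderings 7 8 9"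
    and eq_xy: "(\<lambda>(s, t). transversal s t) x = (\<lambda>(s, t). transversal s t) y"
  moreover obtain a b c d e f a' b' c' d' e' f'
    where xy: "x = ((a, b, c), (d, e, f))" "y = ((a', b', c'), (d', e', f'))"
    by (metis prod.exhaust)
  ultimately have mem: "(a, b, c) \<in> orderings 4 5 6" "(d, e, f) \<in> orderings 7 8 9"
    "(a', b', c') \<in> orderings 4 5 6" "(d', e', f') \<in> orderings 7 8 9"
    and eq: "transversal (a, b, c) (d, e, f) = transversal (a', b', c') (d', e', f')"
    by simp_all
  have bounds: "{a, b, c, a', b', c'} \<subseteq> {4..6}" "{d, e, f, d', e', f'} \<subseteq> {7..9}"
    using mem orderings_interval_iff[of _ _ _ 4] orderings_interval_iff[of _ _ _ 7] by auto
  have cells: "{{1, a, d}, {2, b, e}, {3, c, f}} = {{1, a', d'}, {2, b', e'}, {3, c', f'}}"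
    using eq by simp
  have cell_through: "x = X" if "x \<in> {X, Y, Z}" "k \<in> x" "k \<notin> Y" "k \<notin> Z"
    for x X Y Z :: "nat set" and k
    using that by blast
  have cell_mem: "{1, a, d} \<in> {{1, a', d'}, {2, b', e'}, {3, c', f'}}"
    "{2, b, e} \<in> {{1, a', d'}, {2, b', e'}, {3, c', f'}}"
    "{3, c, f} \<in> {{1, a', d'}, {2, b', e'}, {3, c', f'}}"
    unfolding cells[symmetric] by simp_all
  have "{1, a, d} = {1, a', d'}"
    by (rule cell_through[where k = 1, OF cell_mem(1)]) (use bounds in simp_all)
  moreover have "{2, b, e} = {2, b', e'}"
    by (rule cell_through[where k = 2, OF cell_mem(2)[unfolded insert_commute[of "{1, a', d'}"]]])
      (use bounds in simp_all)
  moreover have "{3, c, f} = {3, c', f'}"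
    by (rule cell_through[where k = 3, OF cell_mem(3)[unfolded insert_commute[of _ "{3, c', f'}"]]])
      (use bounds in simp_all)
  ultimately show "x = y"
    using triple_eq_cancel[of 1 a d a' d'] triple_eq_cancel[of 2 b e b' e']
      triple_eq_cancel[of 3 c f c' f'] bounds xy by auto
qed

lemma sum_standard_neighbours:
  "(\<Sum>Q\<in>{Q\<in>parts333. adj333 standard_partition Q}. g Q)
    = (\<Sum>(s, t)\<in>orderings 4 5 6 \<times> orderings 7 8 9. g (transversal s t))"
  unfolding neighbours_standard_partition sum.reindex[OF inj_on_transversal]
  by (simp add: case_prod_beta comp_def)

lemma standard_neighbours_Mentry_12:
  "(\<Sum>Q\<in>{Q\<in>parts333. adj333 standard_partition Q}. Mentry Q {1, 2} - 1/4)
    = -12 * (Mentry standard_partition {1, 2} - 1/4)"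
  unfolding sum_standard_neighbours
  by (simp add: orderings_def Mentry_def standard_partition_def)

lemma standard_neighbours_Mentry_14:
  "(\<Sum>Q\<in>{Q\<in>parts333. adj333 standard_partition Q}. Mentry Q {1, 4} - 1/4)
    = -12 * (Mentry standard_partition {1, 4} - 1/4)"
  unfolding sum_standard_neighbours
  by (simp add: orderings_def Mentry_def standard_partition_def)

lemma colMJ_eigenvector:
  assumes e: "e \<in> pairs9"
  shows "adjA (colMJ e) = (\<lambda>P. -12 * colMJ e P)"
proof
  fix P
  show "adjA (colMJ e) P = -12 * colMJ e P"
  proof (cases "P \<in> parts333")
    case True
    from e obtain i j where ij: "e = {i, j}" "i \<in> {1..9}" "j \<in> {1..9}" "i \<noteq> j"
      by (rule pairs9E)
    obtain L where L: "bij_betw L {1..9} {1..9}" and P: "image L ` standard_partition = P"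
      and ij_L: "{i, j} = L ` {1, 2} \<or> {i, j} = L ` {1, 4}"
      by (rule parts333_standard_labelling[OF True ij(2-4)])
    obtain e0 where e0: "e0 = {1, 2} \<or> e0 = {1, 4}" and e_eq: "e = L ` e0"
      using ij_L ij(1) by blast
    have inj: "inj_on L {1..9}" using L by (simp add: bij_betw_def)
    have e0_sub: "e0 \<subseteq> {1..9}" using e0 by auto
    let ?N = "{Q\<in>parts333. adj333 standard_partition Q}"
    have "?N \<subseteq> Pow (Pow {1..9})" using parts333D(1) by blast
    then have inj_relabel: "inj_on (image (image L)) ?N"
      by (rule inj_on_subset[OF inj_on_image_Pow[OF inj_on_image_Pow[OF inj]]])
    have "adjA (colMJ e) P = (\<Sum>Q\<in>{Q\<in>parts333. adj333 P Q}. Mentry Q e - 1/4)"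
      using True by (auto simp: adjA_def colMJ_def intro!: sum.cong)
    also have "\<dots> = (\<Sum>Q\<in>?N. Mentry (image L ` Q) (L ` e0) - 1/4)"
      unfolding P[symmetric] neighbours_relabel[OF L standard_partition_in_parts333] e_eq
      by (simp add: sum.reindex[OF inj_relabel])
    also have "\<dots> = (\<Sum>Q\<in>?N. Mentry Q e0 - 1/4)"
      using Mentry_relabel[OF inj _ e0_sub] by simp
    also have "\<dots> = -12 * (Mentry standard_partition e0 - 1/4)"
      using e0 standard_neighbours_Mentry_12 standard_neighbours_Mentry_14 by auto
    also have "\<dots> = -12 * colMJ e P"
      using True Mentry_relabel[OF inj standard_partition_in_parts333 e0_sub]
      by (simp add: colMJ_def P e_eq)
    finally show ?thesis .
  qed (simp add: adjA_def colMJ_def)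
qed

section \<open>The span of the columns\<close>

interpretation V: vector_space "\<lambda>(r::real) (f::nat set set \<Rightarrow> real) x. r * f x"
  by unfold_locales (auto simp: fun_eq_iff algebra_simps)

lemma sum_fun_apply: "(\<Sum>a\<in>A. f a) x = (\<Sum>a\<in>A. f a x)"
  by (induct A rule: infinite_finite_induct) auto

lemma Mentry_eq_sum_cells:
  assumes P: "P \<in> parts333" and e: "e \<in> pairs9"
  shows "Mentry P e = (\<Sum>c\<in>P. if e \<subseteq> c then 1 else 0)"
proof (cases "\<exists>c\<in>P. e \<subseteq> c")
  case True
  then obtain c where c: "c \<in> P" "e \<subseteq> c" by blast
  have "e \<noteq> {}" using e unfolding pairs9_def by auto
  then have "d \<in> P \<Longrightarrow> e \<subseteq> d \<longleftrightarrow> d = c" for d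
    using c parts333D(4)[OF P, of c d] by blast
  then have "(\<Sum>d\<in>P. if e \<subseteq> d then 1 else 0) = (\<Sum>d\<in>P. if d = c then 1 else (0::real))"
    by (intro sum.cong) auto
  also have "\<dots> = 1"
    using c(1) parts333D(2)[OF P] by (simp add: card_ge_0_finite)
  finally show ?thesis using True unfolding Mentry_def by simp
qed (auto simp: Mentry_def)

lemma sum_pairs9_Mentry:
  assumes "P \<in> parts333"
  shows "(\<Sum>e\<in>pairs9. x e * Mentry P e) = (\<Sum>c\<in>P. \<Sum>e\<in>{e\<in>pairs9. e \<subseteq> c}. x e)"
proof -
  have "(\<Sum>e\<in>pairs9. x e * Mentry P e) = (\<Sum>e\<in>pairs9. \<Sum>c\<in>P. if e \<subseteq> c then x e else 0)"
    using assms by (auto simp: Mentry_eq_sum_cells sum_distrib_left intro!: sum.cong)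
  also have "\<dots> = (\<Sum>c\<in>P. \<Sum>e\<in>{e\<in>pairs9. e \<subseteq> c}. x e)"
    by (subst sum.swap) (simp add: sum.inter_filter pairs9_finite)
  finally show ?thesis .
qed

lemma pairs9_in_triple:
  assumes "{a, b, c} \<subseteq> {1..9}" "a \<noteq> b" "a \<noteq> c" "b \<noteq> c"
  shows "{e\<in>pairs9. e \<subseteq> {a, b, c}} = {{a, b}, {a, c}, {b, c}}"
proof
  show "{e\<in>pairs9. e \<subseteq> {a, b, c}} \<subseteq> {{a, b}, {a, c}, {b, c}}"
    by (auto elim!: pairs9E simp: doubleton_eq_iff)
  show "{{a, b}, {a, c}, {b, c}} \<subseteq> {e\<in>pairs9. e \<subseteq> {a, b, c}}"
    using assms by (auto simp: pairs9_doubleton)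
qed

lemma sum_pairs9_in_triple:
  assumes "{a, b, c} \<subseteq> {1..9}" "a \<noteq> b" "a \<noteq> c" "b \<noteq> c"
  shows "(\<Sum>e\<in>{e\<in>pairs9. e \<subseteq> {a, b, c}}. x e) = x {a, b} + x {a, c} + x {b, c}"
  using assms by (simp add: pairs9_in_triple doubleton_eq_iff add.assoc)

lemma sum_pairs9_Mentry_triple:
  assumes "A \<union> B \<union> C = {1..9}" "card A = 3" "card B = 3" "card C = 3"
    and "A \<inter> B = {}" "A \<inter> C = {}" "B \<inter> C = {}"
  shows "(\<Sum>e\<in>pairs9. x e * Mentry {A, B, C} e)
    = (\<Sum>e\<in>{e\<in>pairs9. e \<subseteq> A}. x e) + (\<Sum>e\<in>{e\<in>pairs9. e \<subseteq> B}. x e)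
      + (\<Sum>e\<in>{e\<in>pairs9. e \<subseteq> C}. x e)"
proof -
  have "A \<noteq> {}" "B \<noteq> {}" "C \<noteq> {}" using assms(2-4) by auto
  then have "A \<noteq> B" "A \<noteq> C" "B \<noteq> C" using assms(5-7) by auto
  then show ?thesis
    by (simp add: sum_pairs9_Mentry[OF parts333I[OF assms(1-7)]] add.assoc)
qed

lemma Mentry_row_sum:
  assumes P: "P \<in> parts333"
  shows "(\<Sum>e\<in>pairs9. Mentry P e) = 9"
proof -
  have "(\<Sum>e\<in>{e\<in>pairs9. e \<subseteq> c}. 1) = (3::real)" if c: "c \<in> P" for c
  proof -
    obtain a b d where abd: "c = {a, b, d}" "a \<noteq> b" "b \<noteq> d" "a \<noteq> d"
      using parts333D(3)[OF P c] card_3_iff by metis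
    have "c \<subseteq> {1..9}" using c parts333D(1)[OF P] by blast
    with abd show ?thesis by (simp add: pairs9_in_triple doubleton_eq_iff)
  qed
  then have "(\<Sum>e\<in>pairs9. 1 * Mentry P e) = (\<Sum>c\<in>P. 3)"
    unfolding sum_pairs9_Mentry[OF P] by (intro sum.cong) auto
  then show ?thesis using parts333D(2)[OF P] by simp
qed

lemma sum_colMJ_pairs9: "(\<Sum>e\<in>pairs9. colMJ e) = 0"
proof
  fix P
  show "(\<Sum>e\<in>pairs9. colMJ e) P = 0 P"
    by (cases "P \<in> parts333")
      (simp_all add: sum_fun_apply colMJ_def sum_subtractf Mentry_row_sum card_pairs9)
qed

lemma Mentry_star_sum:
  assumes P: "P \<in> parts333" and i: "i \<in> {1..9}"
  shows "(\<Sum>j\<in>{1..9}-{i}. Mentry P {i, j}) = 2"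
proof -
  obtain c where c: "c \<in> P" "i \<in> c" using i parts333D(1)[OF P] by blast
  have "c \<subseteq> {1..9}" using c parts333D(1)[OF P] by blast
  then have "({1..9}-{i}) \<inter> c = c - {i}" by blast
  moreover have "card (c - {i}) = 2"
    using parts333D(3)[OF P c(1)] c(2) by (simp add: card_ge_0_finite)
  ultimately show ?thesis
    by (simp add: Mentry_cell[OF P c] sum.If_cases)
qed

lemma colMJ_star_sum:
  assumes "i \<in> {1..9}"
  shows "(\<Sum>j\<in>{1..9}-{i}. colMJ {i, j}) = 0"
proof
  fix P
  show "(\<Sum>j\<in>{1..9}-{i}. colMJ {i, j}) P = 0 P"
    using Mentry_star_sum[OF _ assms] assms
    by (cases "P \<in> parts333") (simp_all add: sum_fun_apply colMJ_def sum_subtractf)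
qed

lemma pairs9_through:
  assumes "i \<in> {1..9}"
  shows "{e\<in>pairs9. i \<in> e} = (\<lambda>j. {i, j}) ` ({1..9}-{i})"
  using assms by (auto elim!: pairs9E simp: pairs9_doubleton insert_commute)

lemma sum_colMJ_avoiding_1: "(\<Sum>e\<in>{e\<in>pairs9. 1 \<notin> e}. colMJ e) = 0"
proof -
  have inj: "inj_on (\<lambda>j. {1, j}) ({1..9}-{1::nat})"
    by (auto simp: inj_on_def doubleton_eq_iff)
  have "(\<Sum>e\<in>pairs9. colMJ e)
      = (\<Sum>e\<in>{e\<in>pairs9. 1 \<in> e}. colMJ e) + (\<Sum>e\<in>{e\<in>pairs9. 1 \<notin> e}. colMJ e)"
    by (subst sum.union_disjoint[symmetric]) (auto simp: pairs9_finite intro!: sum.cong)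
  also have "(\<Sum>e\<in>{e\<in>pairs9. 1 \<in> e}. colMJ e) = (\<Sum>j\<in>{1..9}-{1}. colMJ {1, j})"
    by (rule sum.reindex_cong[OF inj pairs9_through]) auto
  also have "\<dots> = 0" by (rule colMJ_star_sum) simp
  finally show ?thesis by (metis sum_colMJ_pairs9 add_0)
qed

(* The hypothesis says that M x is a constant vector: this is what a vanishing combination
   of the columns of M - J/4 amounts to. *)
lemma switch_identity:
  fixes x :: "nat set \<Rightarrow> real"
  assumes const: "\<And>P. P \<in> parts333 \<Longrightarrow> (\<Sum>e\<in>pairs9. x e * Mentry P e) = s"
    and in9: "{k, l, u, v, w, y} \<subseteq> {1..9}" and dist: "distinct [k, l, u, v, w, y]"
  shows "x {k, u} + x {k, v} + x {l, w} + x {l, y} = x {l, u} + x {l, v} + x {k, w} + x {k, y}"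
proof -
  define C where "C = {1..9} - {k, l, u, v, w, y}"
  define S where "S c = (\<Sum>e\<in>{e\<in>pairs9. e \<subseteq> c}. x e)" for c
  have C: "card C = 3" "k \<notin> C" "l \<notin> C" "u \<notin> C" "v \<notin> C" "w \<notin> C" "y \<notin> C"
    unfolding C_def using card_Diff_subset[OF _ in9] dist by simp_all
  have cover: "{k, u, v} \<union> {l, w, y} \<union> C = {1..9}" "{l, u, v} \<union> {k, w, y} \<union> C = {1..9}"
    using in9 unfolding C_def by blast+
  have "(\<Sum>e\<in>pairs9. x e * Mentry {{k, u, v}, {l, w, y}, C} e) = S {k, u, v} + S {l, w, y} + S C"
    unfolding S_def using dist C by (intro sum_pairs9_Mentry_triple cover) auto
  moreover have "(\<Sum>e\<in>pairs9. x e * Mentry {{l, u, v}, {k, w, y}, C} e) = S {l, u, v} + S {k, w, y} + S C"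
    unfolding S_def using dist C by (intro sum_pairs9_Mentry_triple cover) auto
  moreover have "{{k, u, v}, {l, w, y}, C} \<in> parts333" "{{l, u, v}, {k, w, y}, C} \<in> parts333"
    using dist C by (intro parts333I cover; auto)+
  ultimately have "S {k, u, v} + S {l, w, y} = S {l, u, v} + S {k, w, y}"
    using const by simp
  then show ?thesis
    using in9 dist unfolding S_def by (simp add: sum_pairs9_in_triple)
qed

lemma switch_difference:
  fixes x :: "nat set \<Rightarrow> real"
  assumes const: "\<And>P. P \<in> parts333 \<Longrightarrow> (\<Sum>e\<in>pairs9. x e * Mentry P e) = s"
    and in9: "{k, l, u, y} \<subseteq> {1..9}" and dist: "distinct [k, l, u, y]"
  shows "x {k, u} - x {l, u} = x {k, y} - x {l, y}"
proof -
  have "2 \<le> card ({1..9} - {k, l, u, y})"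
    using card_Diff_subset[OF _ in9] dist by simp
  then obtain T where T: "T \<subseteq> {1..9} - {k, l, u, y}" "card T = 2"
    by (rule obtain_subset_with_card_n)
  then obtain v w where "T = {v, w}" "v \<noteq> w" by (auto simp: card_2_iff)
  with T have vw: "{k, l, u, v, w, y} \<subseteq> {1..9}" "distinct [k, l, u, v, w, y]"
      "{k, l, u, w, v, y} \<subseteq> {1..9}" "distinct [k, l, u, w, v, y]"
    using in9 dist by auto
  show ?thesis
    using switch_identity[OF const vw(1,2)] switch_identity[OF const vw(3,4)] by linarith
qed

definition basis_pairs :: "nat set set" where
  "basis_pairs = {e\<in>pairs9. 1 \<notin> e} - {{2, 3}}"

lemma card_basis_pairs: "card basis_pairs = 27"
proof -
  have "e \<subseteq> {1..9} \<and> 1 \<notin> e \<longleftrightarrow> e \<subseteq> {2..9}" for e :: "nat set"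
    by (auto simp: subset_iff) (metis One_nat_def Suc_1 le_antisym not_less_eq_eq)
  then have "{e\<in>pairs9. 1 \<notin> e} = {e. e \<subseteq> {2..9} \<and> card e = 2}"
    unfolding pairs9_def by blast
  then have "card {e\<in>pairs9. 1 \<notin> e} = 28"
    by (simp add: n_subsets numeral_eq_Suc)
  moreover have "{2, 3} \<in> {e\<in>pairs9. 1 \<notin> e}"
    by (simp add: pairs9_doubleton)
  ultimately show ?thesis
    unfolding basis_pairs_def by (simp add: card_Diff_singleton)
qed

lemma pair_function_zero_if_rows_constant:
  fixes x :: "nat set \<Rightarrow> real"
  assumes row: "\<And>l u y. {l, u, y} \<subseteq> {2..9} \<Longrightarrow> l \<noteq> u \<Longrightarrow> l \<noteq> y \<Longrightarrow> x {l, u} = x {l, y}"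
    and x23: "x {2, 3} = 0" and ab: "{a, b} \<subseteq> {2..9}" "a \<noteq> b"
  shows "x {a, b} = 0"
proof -
  have x2: "x {2, b} = 0" if "b \<in> {2..9}" "b \<noteq> 2" for b
    using row[of 2 b 3] that x23 by simp
  have x3: "x {3, b} = 0" if "b \<in> {2..9}" "b \<noteq> 3" for b
    using row[of 3 b 2] that x23 by (simp add: insert_commute)
  consider "a = 2" | "a = 3" | "a \<notin> {2, 3}" by blast
  then show ?thesis
  proof cases
    case 1
    then show ?thesis using x2[of b] ab by simp
  next
    case 2
    then show ?thesis using x3[of b] ab by simp
  next
    case 3
    then have "x {a, b} = x {a, 2}" using row[of a b 2] ab by simp
    also have "\<dots> = 0" using x2[of a] 3 ab by (simp add: insert_commute)
    finally show ?thesis .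
  qed
qed

lemma Mentry_combination_const_imp_zero:
  fixes x :: "nat set \<Rightarrow> real"
  assumes const: "\<And>P. P \<in> parts333 \<Longrightarrow> (\<Sum>e\<in>pairs9. x e * Mentry P e) = s"
    and off: "\<And>e. e \<in> pairs9 \<Longrightarrow> e \<notin> basis_pairs \<Longrightarrow> x e = 0"
    and e: "e \<in> pairs9"
  shows "x e = 0"
proof (cases "e \<in> basis_pairs")
  case True
  have x1: "x {1, j} = 0" if "j \<in> {2..9}" for j
    using that by (intro off) (auto simp: pairs9_doubleton basis_pairs_def)
  have row: "x {l, u} = x {l, y}" if "{l, u, y} \<subseteq> {2..9}" "l \<noteq> u" "l \<noteq> y" for l u y
  proof (cases "u = y")
    case False
    then have "x {1, u} - x {l, u} = x {1, y} - x {l, y}"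
      using that by (intro switch_difference[OF const]) auto
    then show ?thesis using x1 that by simp
  qed simp
  have x23: "x {2, 3} = 0"
    by (intro off) (auto simp: pairs9_doubleton basis_pairs_def)
  from e obtain i j where ij: "e = {i, j}" "i \<in> {1..9}" "j \<in> {1..9}" "i \<noteq> j"
    by (rule pairs9E)
  moreover have "1 \<notin> e" using True unfolding basis_pairs_def by blast
  ultimately show ?thesis
    using pair_function_zero_if_rows_constant[of x i j, OF row x23] by auto
qed (use off e in simp)

lemma colMJ_basis_pairs_combination_zero:
  fixes c :: "nat set \<Rightarrow> real"
  assumes comb: "\<And>P. (\<Sum>e\<in>basis_pairs. c e * colMJ e P) = 0" and e: "e \<in> basis_pairs"
  shows "c e = 0"
proof -
  define x where "x e = (if e \<in> basis_pairs then c e else 0)" for e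
  have sub: "basis_pairs \<subseteq> pairs9" unfolding basis_pairs_def by blast
  have const: "(\<Sum>e\<in>pairs9. x e * Mentry P e) = (\<Sum>e\<in>basis_pairs. c e) / 4"
    if P: "P \<in> parts333" for P
  proof -
    have "(\<Sum>e\<in>pairs9. x e * Mentry P e) = (\<Sum>e\<in>pairs9 \<inter> basis_pairs. c e * Mentry P e)"
      unfolding x_def sum.inter_restrict[OF pairs9_finite] by (intro sum.cong) auto
    also have "\<dots> = (\<Sum>e\<in>basis_pairs. c e * colMJ e P) + (\<Sum>e\<in>basis_pairs. c e) / 4"
      using sub P by (simp add: Int_absorb1 colMJ_def right_diff_distrib sum_subtractf
          flip: sum_divide_distrib)
    finally show ?thesis using comb by simp
  qed
  have "x e = 0"
    by (rule Mentry_combination_const_imp_zero[OF const]) (use sub e in \<open>auto simp: x_def\<close>)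
  then show ?thesis using e by (simp add: x_def)
qed

lemma colMJ_in_span_basis_pairs:
  assumes e: "e \<in> pairs9"
  shows "colMJ e \<in> V.span (colMJ ` basis_pairs)"
proof -
  have fin: "finite {e\<in>pairs9. 1 \<notin> e}" by (simp add: pairs9_finite)
  have avoiding_1: "colMJ e \<in> V.span (colMJ ` basis_pairs)" if "e \<in> pairs9" "1 \<notin> e" for e
  proof (cases "e = {2, 3}")
    case True
    have "(\<Sum>e\<in>{e\<in>pairs9. 1 \<notin> e}. colMJ e) = colMJ {2, 3} + (\<Sum>e\<in>basis_pairs. colMJ e)"
      unfolding basis_pairs_def by (rule sum.remove[OF fin]) (simp add: pairs9_doubleton)
    then have "colMJ {2, 3} + (\<Sum>e\<in>basis_pairs. colMJ e) = 0"
      by (metis sum_colMJ_avoiding_1)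
    then have "colMJ {2, 3} = - (\<Sum>e\<in>basis_pairs. colMJ e)"
      by (simp add: eq_neg_iff_add_eq_0)
    then show ?thesis
      using True by (simp add: V.span_neg V.span_sum V.span_base)
  qed (use that in \<open>simp add: V.span_base basis_pairs_def\<close>)
  show ?thesis
  proof (cases "1 \<in> e")
    case True
    then obtain j where j: "e = {1, j}" "j \<in> {2..9}"
      using e by (elim pairs9E) (auto simp: insert_commute)
    have "(\<Sum>k\<in>{1..9}-{j}. colMJ {j, k}) = colMJ {j, 1} + (\<Sum>k\<in>{1..9}-{j}-{1}. colMJ {j, k})"
      using j by (intro sum.remove) auto
    then have "colMJ e = - (\<Sum>k\<in>{1..9}-{j}-{1}. colMJ {j, k})"
      using colMJ_star_sum[of j] j by (simp add: insert_commute eq_neg_iff_add_eq_0)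
    moreover have "colMJ {j, k} \<in> V.span (colMJ ` basis_pairs)" if "k \<in> {1..9}-{j}-{1}" for k
      using that j by (intro avoiding_1) (auto simp: pairs9_doubleton)
    ultimately show ?thesis by (metis V.span_neg V.span_sum)
  qed (use avoiding_1 e in blast)
qed

lemma inj_on_colMJ_basis_pairs: "inj_on colMJ basis_pairs"
proof (rule inj_onI, rule ccontr)
  fix a b
  assume ab: "a \<in> basis_pairs" "b \<in> basis_pairs" "colMJ a = colMJ b" "a \<noteq> b"
  define c where "c e = (if e = a then 1 else if e = b then -1 else (0::real))" for e
  have "finite basis_pairs" using card_basis_pairs by (simp add: card_ge_0_finite)
  have "(\<Sum>e\<in>basis_pairs. c e * colMJ e P) = 0" for P
  proof -
    have "(\<Sum>e\<in>basis_pairs. c e * colMJ e P) = (\<Sum>e\<in>{a, b}. c e * colMJ e P)"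
      using ab \<open>finite basis_pairs\<close> by (intro sum.mono_neutral_right) (auto simp: c_def)
    also have "\<dots> = 0" using ab by (simp add: c_def)
    finally show ?thesis .
  qed
  then have "c a = 0" using ab(1) by (rule colMJ_basis_pairs_combination_zero)
  then show False by (simp add: c_def)
qed

lemma independent_colMJ_basis_pairs: "V.independent (colMJ ` basis_pairs)"
proof (rule V.independent_if_scalars_zero)
  show "finite (colMJ ` basis_pairs)"
    using card_basis_pairs by (simp add: card_ge_0_finite)
next
  fix f v
  assume comb: "(\<Sum>v\<in>colMJ ` basis_pairs. (\<lambda>r f x. r * f x) (f v) v) = 0"
    and v: "v \<in> colMJ ` basis_pairs"
  have "(\<Sum>e\<in>basis_pairs. f (colMJ e) * colMJ e P) = 0" for P
    using fun_cong[OF comb, of P]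
    by (simp add: sum.reindex[OF inj_on_colMJ_basis_pairs] sum_fun_apply)
  with v show "f v = 0"
    using colMJ_basis_pairs_combination_zero[of "f \<circ> colMJ"] by auto
qed

lemma dim_colMJ_pairs9: "V.dim (colMJ ` pairs9) = 27"
proof (rule V.dim_unique)
  show "colMJ ` basis_pairs \<subseteq> colMJ ` pairs9"
    unfolding basis_pairs_def by blast
  show "colMJ ` pairs9 \<subseteq> V.span (colMJ ` basis_pairs)"
    using colMJ_in_span_basis_pairs by blast
  show "card (colMJ ` basis_pairs) = 27"
    by (simp add: card_image[OF inj_on_colMJ_basis_pairs] card_basis_pairs)
qed (rule independent_colMJ_basis_pairs)

lemma colMJ_nonzero: "colMJ e \<noteq> 0"
proof
  assume "colMJ e = 0"
  then have "colMJ e standard_partition = 0" by simp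
  then show False
    using standard_partition_in_parts333 by (simp add: colMJ_def Mentry_def split: if_splits)
qed

theorem mainTheorem3:
  shows "(\<forall>e\<in>pairs9. colMJ e \<noteq> 0 \<and> adjA (colMJ e) = (\<lambda>P. (-12) * colMJ e P))
         \<and> vector_space.dim (\<lambda>(r::real) (f::nat set set \<Rightarrow> real) x. r * f x) (colMJ ` pairs9) = 27"
  using colMJ_nonzero colMJ_eigenvector dim_colMJ_pairs9 by simp

end
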